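(* Suppose Assumptions (A3) and (A4) hold and $\delta\in\big(0,a(\alpha)^{1/(1+\alpha)}\big)$, where $a(\alpha)=\frac{4^{-\alpha}-e^{-(1+\alpha)\omega}}{2\sigma_1(\alpha)}$. Then $$\sup_{N\ge1}\sup_{n\ge1}E|X_n^{1,N}|^{1+\alpha}<\infty .$$
   Context: Setting. Fix integers $d,m\ge1$, a real $d\times d$ matrix $A$ with operator norm $\|A\|$, $\delta>0$, a Borel probability measure $\theta$ on $\mathbb{R}^m$, and a measurable $f:\mathbb{R}^d\times\mathcal{P}_1(\mathbb{R}^d)\times\mathbb{R}^m\to\mathbb{R}^d$. $\mathcal{P}_1(\mathbb{R}^d)$: Borel probability measures on $\mathbb{R}^d$ with finite first moment, with the Wasserstein-1 distance $\mathcal{W}_1(\mu,\nu)=\inf E|X-Y|$ over couplings. Particle system: for each $N\ge1$, $\{X_0^{i,N}\}_{i=1}^N$ are exchangeable, each with law $\mu_0\in\mathcal{P}_1(\mathbb{R}^d)$; $\{\epsilon_n^i\}_{i,n\ge1}$ i.i.d. with law $\theta$, independent of the initial conditions; $X_{n+1}^{i,N}=AX_n^{i,N}+\delta f(X_n^{i,N},\mu_n^N,\epsilon_{n+1}^i)$, $\mu_n^N=\frac1N\sum_{i=1}^N\delta_{X_n^{i,N}}$. $D(z):=\sup\frac{|f(x_1,\mu_1,z)-f(x_2,\mu_2,z)|}{|x_1-x_2|+\mathcal{W}_1(\mu_1,\mu_2)}$ (supremum over $(x_1,\mu_1)\neq(x_2,\mu_2)$), $D_1(z):=|f(0,\delta_0,z)|$.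 (A3): $\|A\|\le e^{-\omega}$ for some $\omega>0$. (A4): for some $\alpha>0$, $\int|x|^{1+\alpha}\mu_0(dx)<\infty$, $\sigma_1(\alpha):=\int D^{1+\alpha}d\theta<\infty$, $\int D_1^{1+\alpha}d\theta<\infty$. *)

theory Defs
  imports "HOL-Probability.Probability"
begin

definition P1 :: "'a::euclidean_space measure set" where
  "P1 = {\<mu>. prob_space \<mu> \<and> sets \<mu> = sets borel \<and> (\<integral>\<^sup>+x. ennreal (norm x) \<partial>\<mu>) < \<infinity>}"

definition coupling :: "'a::euclidean_space measure \<Rightarrow> 'a measure \<Rightarrow> ('a \<times> 'a) measure \<Rightarrow> bool" where
  "coupling \<mu> \<nu> \<pi> \<longleftrightarrow> prob_space \<pi> \<and> sets \<pi> = sets (borel \<Otimes>\<^sub>M borel)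
     \<and> distr \<pi> borel fst = \<mu> \<and> distr \<pi> borel snd = \<nu>"

definition W1 :: "'a::euclidean_space measure \<Rightarrow> 'a measure \<Rightarrow> ennreal" where
  "W1 \<mu> \<nu> = (INF \<pi> \<in> {\<pi>. coupling \<mu> \<nu> \<pi>}. \<integral>\<^sup>+p. ennreal (dist (fst p) (snd p)) \<partial>\<pi>)"

definition emp :: "nat \<Rightarrow> (nat \<Rightarrow> 'a::euclidean_space) \<Rightarrow> 'a measure" where
  "emp N x = measure_of (space borel) (sets borel)
      (\<lambda>B. ennreal (real (card {i\<in>{1..N}. x i \<in> B}) / real N))"

definition ennpow :: "ennreal \<Rightarrow> real \<Rightarrow> ennreal" where
  "ennpow x p = (if x = \<top> then \<top> else ennreal (enn2real x powr p))"

definition Dlip :: "('a::euclidean_space \<Rightarrow> 'a measure \<Rightarrow> 'b \<Rightarrow> 'a) \<Rightarrow> 'b \<Rightarrow> ennreal" where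
  "Dlip f z = (SUP q \<in> {((x1,\<mu>1),(x2,\<mu>2)). \<mu>1 \<in> P1 \<and> \<mu>2 \<in> P1 \<and> (x1,\<mu>1) \<noteq> (x2,\<mu>2)}.
      (case q of ((x1,\<mu>1),(x2,\<mu>2)) \<Rightarrow>
         ennreal (norm (f x1 \<mu>1 z - f x2 \<mu>2 z)) / (ennreal (dist x1 x2) + W1 \<mu>1 \<mu>2)))"

definition D1 :: "('a::euclidean_space \<Rightarrow> 'a measure \<Rightarrow> 'b \<Rightarrow> 'a) \<Rightarrow> 'b \<Rightarrow> real" where
  "D1 f z = norm (f 0 (return borel 0) z)"

text \<open>The interacting particle system: particle N n i \<omega> = X_n^{i,N}(\<omega>).\<close>
fun particle :: "real^'d::finite^'d \<Rightarrow> real \<Rightarrow> (real^'d \<Rightarrow> (real^'d) measure \<Rightarrow> 'b \<Rightarrow> real^'d)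
    \<Rightarrow> (nat \<Rightarrow> nat \<Rightarrow> 'w \<Rightarrow> real^'d) \<Rightarrow> (nat \<Rightarrow> nat \<Rightarrow> 'w \<Rightarrow> 'b)
    \<Rightarrow> nat \<Rightarrow> nat \<Rightarrow> nat \<Rightarrow> 'w \<Rightarrow> real^'d" where
  "particle A \<delta> f X0 eps N 0 i \<omega> = X0 N i \<omega>"
| "particle A \<delta> f X0 eps N (Suc n) i \<omega> =
     A *v particle A \<delta> f X0 eps N n i \<omega>
     + \<delta> *\<^sub>R f (particle A \<delta> f X0 eps N n i \<omega>)
                 (emp N (\<lambda>j. particle A \<delta> f X0 eps N n j \<omega>)) (eps i (Suc n) \<omega>)"

end

theory Submission
  imports Defs
begin

text \<open>Write p = 1 + \<alpha>. One step of the dynamics gives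
  |X_{n+1}^i| \<le> e^{-\<omega>} |X_n^i| + \<delta> |f(X_n^i, \<mu>_n^N, \<epsilon>) - f(0, \<delta>_0, \<epsilon>)| + \<delta> D_1(\<epsilon>).
  The noise \<epsilon> = \<epsilon>_{n+1}^i is independent of the configuration at time n, so the middle term
  can be integrated against \<theta> with the configuration frozen; there the Lipschitz constant D,
  the coupling bound W_1(\<mu>_n^N, \<delta>_0) \<le> mean_j |X_n^j| and Jensen's inequality bound its p-th
  moment by 2^\<alpha> \<sigma>_1 (E|X_n^i|^p + mean_j E|X_n^j|^p). Splitting the p-th power of the three terms
  by convexity with weights l_1, l_2, l_3 gives a linear recursion for the moments whose
  contraction factor is below 1 under the smallness condition on \<delta>; hence all moments stay
  below the larger of the initial moment and the fixed point of the recursion, uniformly in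
  N and n.\<close>

lemma convex_on_powr_nonneg:
  assumes p: "p \<ge> 1"
  shows "convex_on {0..} (\<lambda>x::real. x powr p)"
proof (rule convex_onI)
  fix t x y :: real
  assume t: "0 < t" "t < 1" and xy: "x \<in> {0..}" "y \<in> {0..}"
  have powr_le_self: "s powr p \<le> s" if "0 \<le> s" "s \<le> 1" for s :: real
  proof (cases "s = 0")
    case False
    then have "s powr p \<le> s powr 1"
      using that p by (intro powr_mono') auto
    then show ?thesis using that by simp
  qed (use p in simp)
  show "((1 - t) *\<^sub>R x + t *\<^sub>R y) powr p \<le> (1 - t) * x powr p + t * y powr p"
  proof (cases "x = 0 \<or> y = 0")
    case False
    then have "x \<in> {0<..}" "y \<in> {0<..}" using xy by auto
    then show ?thesis using convex_onD[OF powr_convex[OF p]] t by simp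
  next
    case True
    then show ?thesis
    proof
      assume "x = 0"
      have "(t * y) powr p = t powr p * y powr p" using t xy by (simp add: powr_mult)
      also have "\<dots> \<le> t * y powr p" using powr_le_self[of t] t by (intro mult_right_mono) auto
      finally show ?thesis using \<open>x = 0\<close> by simp
    next
      assume "y = 0"
      have "((1 - t) * x) powr p = (1 - t) powr p * x powr p" using t xy by (simp add: powr_mult)
      also have "\<dots> \<le> (1 - t) * x powr p" using powr_le_self[of "1 - t"] t by (intro mult_right_mono) auto
      finally show ?thesis using \<open>y = 0\<close> by simp
    qed
  qed
qed (simp add: convex_real_interval)

lemma powr_weighted_mean_le:
  fixes w t :: "'i \<Rightarrow> real"
  assumes "p \<ge> 1" "finite S" "S \<noteq> {}" "\<And>i. i \<in> S \<Longrightarrow> w i \<ge> 0" "sum w S = 1"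
    "\<And>i. i \<in> S \<Longrightarrow> t i \<ge> 0"
  shows "(\<Sum>i\<in>S. w i * t i) powr p \<le> (\<Sum>i\<in>S. w i * t i powr p)"
  using convex_on_sum[OF assms(2,3) convex_on_powr_nonneg[OF assms(1)], of w t] assms by auto

lemma powr_mean_le_mean_powr:
  fixes x :: "nat \<Rightarrow> real"
  assumes "p \<ge> 1" "N \<ge> 1" "\<And>k. x k \<ge> 0"
  shows "((\<Sum>k\<in>{1..N}. x k) / N) powr p \<le> (\<Sum>k\<in>{1..N}. x k powr p) / N"
  using powr_weighted_mean_le[of p "{1..N}" "\<lambda>_. 1 / N" x] assms
  by (simp add: sum_divide_distrib)

lemma powr_sum_le_weighted:
  fixes a l :: "'i \<Rightarrow> real"
  assumes p: "p \<ge> 1" and S: "finite S" and l: "\<And>i. i \<in> S \<Longrightarrow> l i > 0" "sum l S = 1"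
    and a: "\<And>i. i \<in> S \<Longrightarrow> a i \<ge> 0"
  shows "(\<Sum>i\<in>S. a i) powr p \<le> (\<Sum>i\<in>S. l i powr (1 - p) * a i powr p)"
proof -
  have "S \<noteq> {}" using l(2) by auto
  then have "(\<Sum>i\<in>S. l i * (a i / l i)) powr p \<le> (\<Sum>i\<in>S. l i * (a i / l i) powr p)"
    using l a by (intro powr_weighted_mean_le[OF p S]) (auto intro: less_imp_le divide_nonneg_pos)
  moreover have "l i * (a i / l i) = a i" if "i \<in> S" for i
    using l(1)[OF that] by simp
  moreover have "l i * (a i / l i) powr p = l i powr (1 - p) * a i powr p" if "i \<in> S" for i
    using l(1)[OF that] a[OF that] by (simp add: powr_divide powr_diff field_simps)
  ultimately show ?thesis by (simp cong: sum.cong)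
qed

lemma powr_add3_le_weighted:
  fixes a b c l1 l2 l3 p :: real
  assumes p: "p \<ge> 1" and abc: "a \<ge> 0" "b \<ge> 0" "c \<ge> 0"
    and l: "l1 > 0" "l2 > 0" "l3 > 0" "l1 + l2 + l3 = 1"
  shows "(a + b + c) powr p
    \<le> l1 powr (1 - p) * a powr p + l2 powr (1 - p) * b powr p + l3 powr (1 - p) * c powr p"
proof -
  have "(\<Sum>i\<in>{0, 1, 2 :: nat}. [a, b, c] ! i) powr p
      \<le> (\<Sum>i\<in>{0, 1, 2 :: nat}. [l1, l2, l3] ! i powr (1 - p) * [a, b, c] ! i powr p)"
    by (rule powr_sum_le_weighted[OF p]) (use l abc in \<open>auto simp: numeral_2_eq_2\<close>)
  then show ?thesis by (simp add: numeral_2_eq_2 add.assoc)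
qed

lemma powr_add_le:
  fixes a b p :: real
  assumes p: "p \<ge> 1" and ab: "a \<ge> 0" "b \<ge> 0"
  shows "(a + b) powr p \<le> 2 powr (p - 1) * (a powr p + b powr p)"
proof -
  have "(\<Sum>i\<in>{0, 1 :: nat}. [a, b] ! i) powr p
      \<le> (\<Sum>i\<in>{0, 1 :: nat}. (1 / 2) powr (1 - p) * [a, b] ! i powr p)"
    by (rule powr_sum_le_weighted[OF p]) (use ab in auto)
  moreover have "(1 / 2 :: real) powr (1 - p) = 2 powr (p - 1)"
    by (simp add: powr_divide powr_minus_divide[symmetric] powr_minus)
  ultimately show ?thesis by (simp add: distrib_left)
qed

lemma measurable_from_uniform_count_measure:
  "x \<in> measurable (uniform_count_measure A) (borel :: 'a::topological_space measure)"
  by (simp add: measurable_def space_uniform_count_measure sets_uniform_count_measure)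

lemma emp_eq_distr_uniform_count_measure:
  fixes x :: "nat \<Rightarrow> 'a::euclidean_space"
  assumes N: "N \<ge> 1"
  shows "emp N x = distr (uniform_count_measure {1..N}) borel x"
proof -
  let ?U = "uniform_count_measure {1..N}"
  have "distr ?U borel x = measure_of (space borel) (sets borel) (emeasure (distr ?U borel x))"
    by (metis measure_of_of_measure space_distr sets_distr)
  also have "\<dots> = emp N x"
    unfolding emp_def
  proof (rule measure_of_eq)
    show "sets borel \<subseteq> Pow (space (borel :: 'a measure))" by (rule sets.space_closed)
    fix a assume "a \<in> sigma_sets (space (borel :: 'a measure)) (sets borel)"
    then have a: "a \<in> sets borel" using sets.sigma_sets_eq[of "borel :: 'a measure"] by simp
    have "emeasure (distr ?U borel x) a = emeasure ?U (x -` a \<inter> {1..N})"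
      using a by (simp add: emeasure_distr measurable_from_uniform_count_measure space_uniform_count_measure)
    also have "\<dots> = ennreal (real (card (x -` a \<inter> {1..N})) / real N)"
      using N by (subst emeasure_uniform_count_measure)
        (auto simp: ennreal_of_nat_eq_real_of_nat divide_ennreal)
    also have "x -` a \<inter> {1..N} = {i\<in>{1..N}. x i \<in> a}" by auto
    finally show "emeasure (distr ?U borel x) a = ennreal (real (card {i\<in>{1..N}. x i \<in> a}) / real N)" .
  qed
  finally show ?thesis ..
qed

lemma emp_cong:
  assumes "\<And>i. i \<in> {1..N} \<Longrightarrow> x i = y i"
  shows "emp N x = emp N y"
proof -
  have "{i\<in>{1..N}. x i \<in> B} = {i\<in>{1..N}. y i \<in> B}" for B using assms by auto
  then show ?thesis unfolding emp_def by simp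
qed

lemma emp_const:
  assumes "N \<ge> 1"
  shows "emp N (\<lambda>_. c) = return borel (c :: 'a::euclidean_space)"
proof -
  interpret U: prob_space "uniform_count_measure {1..N}"
    using assms by (simp add: prob_space_uniform_count_measure)
  show ?thesis
    unfolding emp_eq_distr_uniform_count_measure[OF assms] by (rule U.distr_const) simp
qed

lemma nn_integral_emp:
  fixes x :: "nat \<Rightarrow> 'a::euclidean_space"
  assumes N: "N \<ge> 1" and g: "g \<in> borel_measurable borel"
  shows "(\<integral>\<^sup>+y. g y \<partial>emp N x) = (\<Sum>i\<in>{1..N}. g (x i)) / of_nat N"
proof -
  have "(\<integral>\<^sup>+y. g y \<partial>emp N x) = (\<integral>\<^sup>+i. g (x i) \<partial>uniform_count_measure {1..N})"
    using N g
    by (simp add: emp_eq_distr_uniform_count_measure nn_integral_distr measurable_from_uniform_count_measure)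
  also have "\<dots> = (\<Sum>i\<in>{1..N}. ennreal (1 / real N) * g (x i))"
    unfolding uniform_count_measure_def by (simp add: nn_integral_point_measure_finite)
  also have "\<dots> = (\<Sum>i\<in>{1..N}. g (x i)) * ennreal (1 / real N)"
    by (simp add: sum_distrib_right mult.commute[of "ennreal (1 / real N)"])
  also have "\<dots> = (\<Sum>i\<in>{1..N}. g (x i)) / of_nat N"
    using N by (simp add: divide_ennreal_def ennreal_of_nat_eq_real_of_nat inverse_ennreal
        inverse_eq_divide)
  finally show ?thesis .
qed

lemma emp_in_P1:
  fixes x :: "nat \<Rightarrow> 'a::euclidean_space"
  assumes N: "N \<ge> 1"
  shows "emp N x \<in> P1"
proof -
  have "prob_space (emp N x)"
    using N by (simp add: emp_eq_distr_uniform_count_measure prob_space.prob_space_distr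
        measurable_from_uniform_count_measure prob_space_uniform_count_measure)
  moreover have "(\<integral>\<^sup>+y. ennreal (norm y) \<partial>emp N x) < \<infinity>"
    using N by (simp add: nn_integral_emp ennreal_divide_eq_top_iff less_top[symmetric])
  moreover have "sets (emp N x) = sets borel"
    using N by (simp add: emp_eq_distr_uniform_count_measure)
  ultimately show ?thesis unfolding P1_def by simp
qed

lemma return_in_P1: "return borel (c :: 'a::euclidean_space) \<in> P1"
  unfolding P1_def by (simp add: prob_space_return nn_integral_return)

text \<open>Couple the empirical measure with the Dirac mass by sending every atom to the origin.\<close>
lemma W1_emp_return_0_le:
  fixes x :: "nat \<Rightarrow> 'a::euclidean_space"
  assumes N: "N \<ge> 1"
  shows "W1 (emp N x) (return borel 0) \<le> ennreal ((\<Sum>i\<in>{1..N}. norm (x i)) / N)"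
proof -
  let ?U = "uniform_count_measure {1..N}"
  interpret U: prob_space ?U using N by (simp add: prob_space_uniform_count_measure)
  define \<pi> where "\<pi> = distr ?U (borel \<Otimes>\<^sub>M borel) (\<lambda>i. (x i, 0 :: 'a))"
  have pm: "(\<lambda>i. (x i, 0 :: 'a)) \<in> measurable ?U (borel \<Otimes>\<^sub>M borel)"
    by (simp add: measurable_def space_uniform_count_measure sets_uniform_count_measure space_pair_measure)
  have "coupling (emp N x) (return borel 0) \<pi>"
    unfolding coupling_def
  proof (intro conjI)
    show "prob_space \<pi>" unfolding \<pi>_def by (rule U.prob_space_distr[OF pm])
    show "sets \<pi> = sets (borel \<Otimes>\<^sub>M borel)" unfolding \<pi>_def by simp
    show "distr \<pi> borel fst = emp N x"
      unfolding \<pi>_def using N pm by (simp add: distr_distr comp_def emp_eq_distr_uniform_count_measure)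
    have "distr ?U borel (\<lambda>_. 0 :: 'a) = return borel 0" by (rule U.distr_const) simp
    then show "distr \<pi> borel snd = return borel 0"
      unfolding \<pi>_def using pm by (simp add: distr_distr comp_def)
  qed
  moreover have "(\<integral>\<^sup>+p. ennreal (dist (fst p) (snd p)) \<partial>\<pi>) = ennreal ((\<Sum>i\<in>{1..N}. norm (x i)) / N)"
  proof -
    have "(\<integral>\<^sup>+p. ennreal (dist (fst p) (snd p)) \<partial>\<pi>) = (\<integral>\<^sup>+i. ennreal (norm (x i)) \<partial>?U)"
      unfolding \<pi>_def using pm by (simp add: nn_integral_distr)
    also have "\<dots> = (\<Sum>i\<in>{1..N}. ennreal (1 / real N) * ennreal (norm (x i)))"
      unfolding uniform_count_measure_def by (simp add: nn_integral_point_measure_finite)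
    also have "\<dots> = ennreal ((\<Sum>i\<in>{1..N}. norm (x i)) / N)"
      by (simp add: ennreal_mult[symmetric] sum_divide_distrib sum_ennreal)
    finally show ?thesis .
  qed
  ultimately show ?thesis
    unfolding W1_def by (metis (mono_tags) INF_lower mem_Collect_eq)
qed

lemma measurable_emp:
  assumes N: "N \<ge> 1"
  shows "(\<lambda>v. emp N v) \<in> measurable (PiM {1..N} (\<lambda>_. borel :: 'a::euclidean_space measure))
            (restrict_space (subprob_algebra borel) P1)"
proof (rule measurable_restrict_space2)
  show "(\<lambda>v. emp N v) \<in> space (PiM {1..N} (\<lambda>_. borel :: 'a measure)) \<rightarrow> P1"
    using emp_in_P1[OF N] by auto
  show "(\<lambda>v. emp N v) \<in> measurable (PiM {1..N} (\<lambda>_. borel :: 'a measure)) (subprob_algebra borel)"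
  proof (rule measurable_subprob_algebra)
    fix v :: "nat \<Rightarrow> 'a"
    show "subprob_space (emp N v)" "sets (emp N v) = sets borel"
      using emp_in_P1[OF N, of v] by (auto simp: P1_def prob_space_imp_subprob_space)
  next
    fix B :: "'a set" assume B: "B \<in> sets borel"
    have "emeasure (emp N v) B = (\<Sum>i\<in>{1..N}. indicator B (v i)) / of_nat N" for v :: "nat \<Rightarrow> 'a"
      using B N nn_integral_emp[of N "indicator B" v]
      by (simp add: emp_eq_distr_uniform_count_measure)
    moreover have "(\<lambda>v. (\<Sum>i\<in>{1..N}. indicator B (v i) :: ennreal) / of_nat N)
        \<in> borel_measurable (PiM {1..N} (\<lambda>_. borel :: 'a measure))"
      using B by measurable
    ultimately show "(\<lambda>v. emeasure (emp N v) B) \<in> borel_measurable (PiM {1..N} (\<lambda>_. borel :: 'a measure))"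
      by simp
  qed
qed

lemma Dlip_lower_bound:
  assumes "\<mu>1 \<in> P1" "\<mu>2 \<in> P1" "(x1, \<mu>1) \<noteq> (x2, \<mu>2)"
  shows "ennreal (norm (f x1 \<mu>1 z - f x2 \<mu>2 z)) / (ennreal (dist x1 x2) + W1 \<mu>1 \<mu>2) \<le> Dlip f z"
  unfolding Dlip_def
  by (rule SUP_upper2[of "((x1, \<mu>1), (x2, \<mu>2))"]) (use assms in auto)

lemma ennreal_powr_le_ennpow:
  assumes "ennreal a \<le> d" "a \<ge> 0" "p \<ge> 0"
  shows "ennreal (a powr p) \<le> ennpow d p"
proof (cases "d = \<top>")
  case False
  then obtain r where r: "d = ennreal r" "r \<ge> 0" by (cases d) auto
  then have "a \<le> r" using assms by simp
  then show ?thesis using r assms by (simp add: ennpow_def powr_mono2)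
qed (simp add: ennpow_def)

lemma ennreal_divide_le_divide_ennreal:
  assumes "a \<ge> 0" "c > 0" "d \<le> ennreal c"
  shows "ennreal (a / c) \<le> ennreal a / d"
proof -
  obtain r where r: "d = ennreal r" "0 \<le> r" "r \<le> c"
    using assms(2,3) by (cases d) (auto simp: top_unique)
  show ?thesis
  proof (cases "r = 0 \<or> a = 0")
    case True
    then show ?thesis
      using assms(1) r by (auto simp: divide_ennreal_def ennreal_mult_top)
  next
    case False
    then have "a / c \<le> a / r" using assms r by (intro divide_left_mono) auto
    then show ?thesis using False r assms(1) by (simp add: divide_ennreal)
  qed
qed

lemma powr_divide_le_ennpow_Dlip:
  assumes "\<mu>1 \<in> P1" "\<mu>2 \<in> P1" "ennreal (dist x1 x2) + W1 \<mu>1 \<mu>2 \<le> ennreal c" "c > 0" "p \<ge> 0"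
  shows "ennreal ((norm (f x1 \<mu>1 z - f x2 \<mu>2 z) / c) powr p) \<le> ennpow (Dlip f z) p"
proof (rule ennreal_powr_le_ennpow)
  show "ennreal (norm (f x1 \<mu>1 z - f x2 \<mu>2 z) / c) \<le> Dlip f z"
  proof (cases "(x1, \<mu>1) = (x2, \<mu>2)")
    case False
    have "ennreal (norm (f x1 \<mu>1 z - f x2 \<mu>2 z) / c)
        \<le> ennreal (norm (f x1 \<mu>1 z - f x2 \<mu>2 z)) / (ennreal (dist x1 x2) + W1 \<mu>1 \<mu>2)"
      by (rule ennreal_divide_le_divide_ennreal[OF norm_ge_zero assms(4,3)])
    also have "\<dots> \<le> Dlip f z"
      by (rule Dlip_lower_bound[OF assms(1,2) False])
    finally show ?thesis .
  qed auto
qed (use assms in auto)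

text \<open>The constant \<open>c\<close> is pulled out of the integral of the measurable integrand, not of the
  integral of \<open>Dlip f\<close>, whose measurability is unknown.\<close>
lemma nn_integral_Dlip_powr_le:
  assumes "\<mu>1 \<in> P1" "\<mu>2 \<in> P1" "ennreal (dist x1 x2) + W1 \<mu>1 \<mu>2 \<le> ennreal c" "c > 0" "p \<ge> 0"
    and meas: "(\<lambda>z. f x1 \<mu>1 z) \<in> borel_measurable \<theta>" "(\<lambda>z. f x2 \<mu>2 z) \<in> borel_measurable \<theta>"
  shows "(\<integral>\<^sup>+z. ennreal (norm (f x1 \<mu>1 z - f x2 \<mu>2 z) powr p) \<partial>\<theta>)
    \<le> ennreal (c powr p) * (\<integral>\<^sup>+z. ennpow (Dlip f z) p \<partial>\<theta>)"
proof -
  define \<Delta> where "\<Delta> z = norm (f x1 \<mu>1 z - f x2 \<mu>2 z)" for z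
  have "ennreal (\<Delta> z powr p) = ennreal (c powr p) * ennreal ((\<Delta> z / c) powr p)" for z
    using \<open>c > 0\<close> by (simp add: \<Delta>_def powr_divide ennreal_mult[symmetric])
  then have "(\<integral>\<^sup>+z. ennreal (\<Delta> z powr p) \<partial>\<theta>) = ennreal (c powr p) * (\<integral>\<^sup>+z. ennreal ((\<Delta> z / c) powr p) \<partial>\<theta>)"
    using meas by (simp add: \<Delta>_def nn_integral_cmult)
  also have "\<dots> \<le> ennreal (c powr p) * (\<integral>\<^sup>+z. ennpow (Dlip f z) p \<partial>\<theta>)"
    using powr_divide_le_ennpow_Dlip[OF assms(1-5)]
    by (intro mult_left_mono nn_integral_mono) (auto simp: \<Delta>_def)
  finally show ?thesis by (simp add: \<Delta>_def)
qed

lemma measurable_section: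
  assumes f_meas: "(\<lambda>(x, \<mu>, z). f x \<mu> z) \<in>
      borel_measurable (borel \<Otimes>\<^sub>M (restrict_space (subprob_algebra borel) P1 \<Otimes>\<^sub>M borel))"
    and "\<mu> \<in> P1"
  shows "(\<lambda>z. f x \<mu> z) \<in> borel_measurable borel"
proof -
  have "\<mu> \<in> space (restrict_space (subprob_algebra borel) P1)"
    using \<open>\<mu> \<in> P1\<close>
    by (auto simp: space_restrict_space space_subprob_algebra P1_def prob_space_imp_subprob_space)
  then have "(\<lambda>z. (x, \<mu>, z))
      \<in> measurable borel (borel \<Otimes>\<^sub>M (restrict_space (subprob_algebra borel) P1 \<Otimes>\<^sub>M borel))"
    by (intro measurable_Pair measurable_const) auto
  from measurable_comp[OF this f_meas] show ?thesis by (simp add: comp_def)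
qed

lemma nn_integral_interaction_le:
  fixes f :: "'a::euclidean_space \<Rightarrow> 'a measure \<Rightarrow> 'b::topological_space \<Rightarrow> 'a"
  assumes N: "N \<ge> 1" and j: "j \<in> {1..N}" and p: "p \<ge> 1"
    and f_meas: "(\<lambda>(x, \<mu>, z). f x \<mu> z) \<in>
      borel_measurable (borel \<Otimes>\<^sub>M (restrict_space (subprob_algebra borel) P1 \<Otimes>\<^sub>M borel))"
    and theta: "sets \<theta> = sets borel"
  shows "(\<integral>\<^sup>+z. ennreal (norm (f (v j) (emp N v) z - f 0 (return borel 0) z) powr p) \<partial>\<theta>)
    \<le> ennreal (2 powr (p - 1) * (norm (v j) powr p + (\<Sum>k\<in>{1..N}. norm (v k) powr p) / N))
       * (\<integral>\<^sup>+z. ennpow (Dlip f z) p \<partial>\<theta>)"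
proof -
  define c where "c = norm (v j) + (\<Sum>k\<in>{1..N}. norm (v k)) / N"
  have "c \<ge> 0" by (simp add: c_def sum_nonneg)
  then consider "c = 0" | "c > 0" by linarith
  then show ?thesis
  proof cases
    case 1
    then have "v k = 0" if "k \<in> {1..N}" for k
      using that j by (simp add: c_def add_nonneg_eq_0_iff sum_nonneg sum_nonneg_eq_0_iff)
    then have "emp N v = return borel 0" "v j = 0"
      using emp_cong[of N v "\<lambda>_. 0"] emp_const[OF N] j by auto
    then show ?thesis by simp
  next
    case 2
    have "ennreal (dist (v j) 0) + W1 (emp N v) (return borel 0)
        \<le> ennreal (norm (v j)) + ennreal ((\<Sum>k\<in>{1..N}. norm (v k)) / N)"
      using W1_emp_return_0_le[OF N, of v] by (simp add: add_left_mono)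
    also have "\<dots> = ennreal c" by (simp add: c_def sum_nonneg ennreal_plus)
    finally have dist_W1: "ennreal (dist (v j) 0) + W1 (emp N v) (return borel 0) \<le> ennreal c" .
    have meas: "(\<lambda>z. f x \<mu> z) \<in> borel_measurable \<theta>" if "\<mu> \<in> P1" for x \<mu>
      using measurable_section[OF f_meas that] by (simp add: measurable_cong_sets[OF theta refl])
    have "c powr p \<le> 2 powr (p - 1) * (norm (v j) powr p + ((\<Sum>k\<in>{1..N}. norm (v k)) / N) powr p)"
      unfolding c_def using p by (intro powr_add_le) (auto simp: sum_nonneg)
    also have "\<dots> \<le> 2 powr (p - 1) * (norm (v j) powr p + (\<Sum>k\<in>{1..N}. norm (v k) powr p) / N)"
      using powr_mean_le_mean_powr[OF p N, of "\<lambda>k. norm (v k)"] by simp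
    finally have c_powr: "c powr p \<le> 2 powr (p - 1) * (norm (v j) powr p + (\<Sum>k\<in>{1..N}. norm (v k) powr p) / N)" .
    have "(\<integral>\<^sup>+z. ennreal (norm (f (v j) (emp N v) z - f 0 (return borel 0) z) powr p) \<partial>\<theta>)
        \<le> ennreal (c powr p) * (\<integral>\<^sup>+z. ennpow (Dlip f z) p \<partial>\<theta>)"
      using p 2 by (intro nn_integral_Dlip_powr_le[OF emp_in_P1[OF N] return_in_P1 dist_W1] meas
          emp_in_P1[OF N] return_in_P1) auto
    also have "\<dots> \<le> ennreal (2 powr (p - 1) * (norm (v j) powr p + (\<Sum>k\<in>{1..N}. norm (v k) powr p) / N))
       * (\<integral>\<^sup>+z. ennpow (Dlip f z) p \<partial>\<theta>)"
      using c_powr by (intro mult_right_mono ennreal_leI) auto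
    finally show ?thesis .
  qed
qed

lemma measurable_interaction:
  fixes f :: "'a::euclidean_space \<Rightarrow> 'a measure \<Rightarrow> 'b::topological_space \<Rightarrow> 'c::topological_space"
  assumes N: "N \<ge> 1" and j: "j \<in> {1..N}"
    and f_meas: "(\<lambda>(x, \<mu>, z). f x \<mu> z) \<in>
      borel_measurable (borel \<Otimes>\<^sub>M (restrict_space (subprob_algebra borel) P1 \<Otimes>\<^sub>M borel))"
  shows "(\<lambda>vz. f (fst vz j) (emp N (fst vz)) (snd vz))
    \<in> borel_measurable (PiM {1..N} (\<lambda>_. borel) \<Otimes>\<^sub>M borel)"
proof -
  have "(\<lambda>vz. fst vz j) \<in> borel_measurable (PiM {1..N} (\<lambda>_. borel) \<Otimes>\<^sub>M borel)"
    using measurable_comp[OF measurable_fst measurable_component_singleton[OF j]]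
    by (simp add: comp_def)
  moreover have "(\<lambda>vz. emp N (fst vz)) \<in> measurable (PiM {1..N} (\<lambda>_. borel) \<Otimes>\<^sub>M borel)
      (restrict_space (subprob_algebra borel) P1)"
    using measurable_comp[OF measurable_fst measurable_emp[OF N]] by (simp add: comp_def)
  ultimately have "(\<lambda>vz. (fst vz j, emp N (fst vz), snd vz)) \<in> measurable
      (PiM {1..N} (\<lambda>_. borel) \<Otimes>\<^sub>M borel)
      (borel \<Otimes>\<^sub>M (restrict_space (subprob_algebra borel) P1 \<Otimes>\<^sub>M borel))"
    by (intro measurable_Pair measurable_snd)
  from measurable_comp[OF this f_meas] show ?thesis by (simp add: comp_def)
qed

lemma measurable_interaction_comp:
  fixes f :: "'a::euclidean_space \<Rightarrow> 'a measure \<Rightarrow> 'b::topological_space \<Rightarrow> 'c::topological_space"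
  assumes N: "N \<ge> 1" and j: "j \<in> {1..N}"
    and f_meas: "(\<lambda>(x, \<mu>, z). f x \<mu> z) \<in>
      borel_measurable (borel \<Otimes>\<^sub>M (restrict_space (subprob_algebra borel) P1 \<Otimes>\<^sub>M borel))"
    and X: "\<And>k. k \<in> {1..N} \<Longrightarrow> X k \<in> borel_measurable M" and \<epsilon>: "\<epsilon> \<in> borel_measurable M"
  shows "(\<lambda>\<omega>. f (X j \<omega>) (emp N (\<lambda>k. X k \<omega>)) (\<epsilon> \<omega>)) \<in> borel_measurable M"
proof -
  have "(\<lambda>\<omega>. \<lambda>k\<in>{1..N}. X k \<omega>) \<in> measurable M (PiM {1..N} (\<lambda>_. borel))"
    using X by (intro measurable_restrict) auto
  from measurable_comp[OF measurable_Pair[OF this \<epsilon>] measurable_interaction[OF N j f_meas]]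
  have "(\<lambda>\<omega>. f (X j \<omega>) (emp N (\<lambda>k\<in>{1..N}. X k \<omega>)) (\<epsilon> \<omega>)) \<in> borel_measurable M"
    using j by (simp add: comp_def)
  moreover have "emp N (\<lambda>k\<in>{1..N}. X k \<omega>) = emp N (\<lambda>k. X k \<omega>)" for \<omega>
    by (rule emp_cong) simp
  ultimately show ?thesis by simp
qed

lemma (in prob_space) nn_integral_indep_pair:
  assumes X: "random_variable S X" and Y: "random_variable T Y"
    and prod: "distr M S X \<Otimes>\<^sub>M distr M T Y = distr M (S \<Otimes>\<^sub>M T) (\<lambda>\<omega>. (X \<omega>, Y \<omega>))"
    and G: "G \<in> borel_measurable (S \<Otimes>\<^sub>M T)"
  shows "(\<integral>\<^sup>+\<omega>. G (X \<omega>, Y \<omega>) \<partial>M) = (\<integral>\<^sup>+x. (\<integral>\<^sup>+y. G (x, y) \<partial>distr M T Y) \<partial>distr M S X)"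
proof -
  interpret SX: prob_space "distr M S X" by (rule prob_space_distr[OF X])
  interpret TY: prob_space "distr M T Y" by (rule prob_space_distr[OF Y])
  interpret pair_prob_space "distr M S X" "distr M T Y" ..
  have "sets (distr M S X \<Otimes>\<^sub>M distr M T Y) = sets (S \<Otimes>\<^sub>M T)"
    by (intro sets_pair_measure_cong) simp_all
  then have G': "G \<in> borel_measurable (distr M S X \<Otimes>\<^sub>M distr M T Y)"
    unfolding measurable_cong_sets[OF _ refl] using G by simp
  have "(\<integral>\<^sup>+\<omega>. G (X \<omega>, Y \<omega>) \<partial>M) = (\<integral>\<^sup>+xy. G xy \<partial>distr M (S \<Otimes>\<^sub>M T) (\<lambda>\<omega>. (X \<omega>, Y \<omega>)))"
    using G by (simp add: nn_integral_distr measurable_Pair[OF X Y])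
  also have "\<dots> = (\<integral>\<^sup>+xy. G xy \<partial>(distr M S X \<Otimes>\<^sub>M distr M T Y))" by (simp only: prod)
  also have "\<dots> = (\<integral>\<^sup>+x. (\<integral>\<^sup>+y. G (x, y) \<partial>distr M T Y) \<partial>distr M S X)"
    by (rule TY.nn_integral_fst[OF G', symmetric])
  finally show ?thesis .
qed

lemma ennreal_mult_add_mean:
  fixes a :: real and b :: "nat \<Rightarrow> real"
  assumes "c \<ge> 0" "a \<ge> 0" "\<And>k. b k \<ge> 0" "N \<ge> 1"
  shows "ennreal (c * (a + (\<Sum>k\<in>{1..N}. b k) / N))
    = ennreal c * (ennreal a + (\<Sum>k\<in>{1..N}. ennreal (b k)) / of_nat N)"
  using assms
  by (simp add: ennreal_mult ennreal_plus sum_nonneg sum_ennreal[symmetric] divide_ennreal[symmetric]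
      ennreal_of_nat_eq_real_of_nat del: sum_ennreal)

lemma nn_integral_add_mean:
  fixes g :: "nat \<Rightarrow> 'a \<Rightarrow> ennreal"
  assumes g: "\<And>k. k \<in> {1..N} \<Longrightarrow> g k \<in> borel_measurable M" and j: "j \<in> {1..N}"
  shows "(\<integral>\<^sup>+\<omega>. g j \<omega> + (\<Sum>k\<in>{1..N}. g k \<omega>) / of_nat N \<partial>M)
    = (\<integral>\<^sup>+\<omega>. g j \<omega> \<partial>M) + (\<Sum>k\<in>{1..N}. \<integral>\<^sup>+\<omega>. g k \<omega> \<partial>M) / of_nat N"
proof -
  have sum: "(\<lambda>\<omega>. \<Sum>k\<in>{1..N}. g k \<omega>) \<in> borel_measurable M"
    by (rule borel_measurable_sum) (rule g)
  then have "(\<lambda>\<omega>. (\<Sum>k\<in>{1..N}. g k \<omega>) / of_nat N) \<in> borel_measurable M"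
    by (intro borel_measurable_divide_ennreal) auto
  then have "(\<integral>\<^sup>+\<omega>. g j \<omega> + (\<Sum>k\<in>{1..N}. g k \<omega>) / of_nat N \<partial>M)
      = (\<integral>\<^sup>+\<omega>. g j \<omega> \<partial>M) + (\<integral>\<^sup>+\<omega>. (\<Sum>k\<in>{1..N}. g k \<omega>) \<partial>M) / of_nat N"
    using g[OF j] sum by (simp add: nn_integral_add nn_integral_divide)
  also have "(\<integral>\<^sup>+\<omega>. (\<Sum>k\<in>{1..N}. g k \<omega>) \<partial>M) = (\<Sum>k\<in>{1..N}. \<integral>\<^sup>+\<omega>. g k \<omega> \<partial>M)"
    by (rule nn_integral_sum) (rule g)
  finally show ?thesis .
qed

lemma (in prob_space) nn_integral_interaction_indep_le:
  fixes X :: "nat \<Rightarrow> 'a \<Rightarrow> 'c::euclidean_space" and \<epsilon> :: "'a \<Rightarrow> 'b::topological_space"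
  assumes N: "N \<ge> 1" and j: "j \<in> {1..N}" and p: "p \<ge> 1"
    and f_meas: "(\<lambda>(x, \<mu>, z). f x \<mu> z) \<in>
      borel_measurable (borel \<Otimes>\<^sub>M (restrict_space (subprob_algebra borel) P1 \<Otimes>\<^sub>M borel))"
    and X: "\<And>k. k \<in> {1..N} \<Longrightarrow> X k \<in> borel_measurable M"
    and eps: "random_variable borel \<epsilon>" and law: "distr M borel \<epsilon> = \<theta>"
    and indep: "distr M (PiM {1..N} (\<lambda>_. borel)) (\<lambda>\<omega>. \<lambda>k\<in>{1..N}. X k \<omega>) \<Otimes>\<^sub>M distr M borel \<epsilon>
      = distr M (PiM {1..N} (\<lambda>_. borel) \<Otimes>\<^sub>M borel) (\<lambda>\<omega>. (\<lambda>k\<in>{1..N}. X k \<omega>, \<epsilon> \<omega>))"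
  shows "(\<integral>\<^sup>+\<omega>. ennreal (norm (f (X j \<omega>) (emp N (\<lambda>k. X k \<omega>)) (\<epsilon> \<omega>) - f 0 (return borel 0) (\<epsilon> \<omega>)) powr p) \<partial>M)
    \<le> ennreal (2 powr (p - 1)) * (\<integral>\<^sup>+z. ennpow (Dlip f z) p \<partial>\<theta>)
       * ((\<integral>\<^sup>+\<omega>. ennreal (norm (X j \<omega>) powr p) \<partial>M)
          + (\<Sum>k\<in>{1..N}. \<integral>\<^sup>+\<omega>. ennreal (norm (X k \<omega>) powr p) \<partial>M) / of_nat N)"
proof -
  define V where "V \<omega> = (\<lambda>k\<in>{1..N}. X k \<omega>)" for \<omega>
  define G where "G vz = ennreal (norm (f (fst vz j) (emp N (fst vz)) (snd vz)
      - f 0 (return borel 0) (snd vz)) powr p)" for vz :: "(nat \<Rightarrow> 'c) \<times> 'b"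
  define \<sigma> where "\<sigma> = (\<integral>\<^sup>+z. ennpow (Dlip f z) p \<partial>\<theta>)"
  define B where "B v = ennreal (2 powr (p - 1)) * (ennreal (norm (v j) powr p)
      + (\<Sum>k\<in>{1..N}. ennreal (norm (v k) powr p)) / of_nat N)" for v :: "nat \<Rightarrow> 'c"
  have theta: "sets \<theta> = sets borel" using law[symmetric] by simp
  have V: "V \<in> measurable M (PiM {1..N} (\<lambda>_. borel))"
    unfolding V_def using X by (intro measurable_restrict) auto
  have f0: "(\<lambda>z. f 0 (return borel 0) z) \<in> borel_measurable borel"
    by (rule measurable_section[OF f_meas return_in_P1])
  have G_meas: "G \<in> borel_measurable (PiM {1..N} (\<lambda>_. borel) \<Otimes>\<^sub>M borel)"
    unfolding G_def using measurable_interaction[OF N j f_meas] f0 by measurable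
  have B_meas: "B \<in> borel_measurable (PiM {1..N} (\<lambda>_. borel))"
    unfolding B_def using j by measurable
  have "(\<integral>\<^sup>+\<omega>. ennreal (norm (f (X j \<omega>) (emp N (\<lambda>k. X k \<omega>)) (\<epsilon> \<omega>) - f 0 (return borel 0) (\<epsilon> \<omega>)) powr p) \<partial>M)
      = (\<integral>\<^sup>+\<omega>. G (V \<omega>, \<epsilon> \<omega>) \<partial>M)"
  proof -
    have "emp N (\<lambda>k. X k \<omega>) = emp N (\<lambda>k\<in>{1..N}. X k \<omega>)" for \<omega>
      by (rule emp_cong) simp
    then show ?thesis using j by (simp add: G_def V_def)
  qed
  also have "\<dots> = (\<integral>\<^sup>+v. (\<integral>\<^sup>+z. G (v, z) \<partial>\<theta>) \<partial>distr M (PiM {1..N} (\<lambda>_. borel)) V)"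
    using nn_integral_indep_pair[OF V eps indep[folded V_def] G_meas] law by simp
  also have "\<dots> \<le> (\<integral>\<^sup>+v. B v * \<sigma> \<partial>distr M (PiM {1..N} (\<lambda>_. borel)) V)"
  proof (rule nn_integral_mono)
    fix v :: "nat \<Rightarrow> 'c"
    have "(\<integral>\<^sup>+z. G (v, z) \<partial>\<theta>)
      \<le> ennreal (2 powr (p - 1) * (norm (v j) powr p + (\<Sum>k\<in>{1..N}. norm (v k) powr p) / N)) * \<sigma>"
      unfolding G_def \<sigma>_def fst_conv snd_conv by (rule nn_integral_interaction_le[OF N j p f_meas theta])
    also have "ennreal (2 powr (p - 1) * (norm (v j) powr p + (\<Sum>k\<in>{1..N}. norm (v k) powr p) / N)) = B v"
      unfolding B_def by (rule ennreal_mult_add_mean) (use N in auto)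
    finally show "(\<integral>\<^sup>+z. G (v, z) \<partial>\<theta>) \<le> B v * \<sigma>" .
  qed
  also have "\<dots> = (\<integral>\<^sup>+\<omega>. B (V \<omega>) * \<sigma> \<partial>M)"
    using B_meas V by (simp add: nn_integral_distr)
  also have "\<dots> = ennreal (2 powr (p - 1)) * \<sigma> * ((\<integral>\<^sup>+\<omega>. ennreal (norm (X j \<omega>) powr p) \<partial>M)
          + (\<Sum>k\<in>{1..N}. \<integral>\<^sup>+\<omega>. ennreal (norm (X k \<omega>) powr p) \<partial>M) / of_nat N)"
  proof -
    define g where "g k \<omega> = ennreal (norm (X k \<omega>) powr p)" for k \<omega>
    have g: "g k \<in> borel_measurable M" if "k \<in> {1..N}" for k
      unfolding g_def using X[OF that] by measurable
    have "(\<lambda>\<omega>. B (V \<omega>)) \<in> borel_measurable M"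
      using measurable_comp[OF V B_meas] by (simp add: comp_def)
    then have "(\<integral>\<^sup>+\<omega>. B (V \<omega>) * \<sigma> \<partial>M) = (\<integral>\<^sup>+\<omega>. B (V \<omega>) \<partial>M) * \<sigma>"
      by (rule nn_integral_multc)
    also have "B (V \<omega>) = ennreal (2 powr (p - 1)) * (g j \<omega> + (\<Sum>k\<in>{1..N}. g k \<omega>) / of_nat N)" for \<omega>
      using j by (simp add: B_def V_def g_def)
    then have "(\<integral>\<^sup>+\<omega>. B (V \<omega>) \<partial>M)
        = ennreal (2 powr (p - 1)) * (\<integral>\<^sup>+\<omega>. g j \<omega> + (\<Sum>k\<in>{1..N}. g k \<omega>) / of_nat N \<partial>M)"
      using g[OF j] g by (simp add: nn_integral_cmult borel_measurable_sum borel_measurable_divide_ennreal)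
    also have "(\<integral>\<^sup>+\<omega>. g j \<omega> + (\<Sum>k\<in>{1..N}. g k \<omega>) / of_nat N \<partial>M)
        = (\<integral>\<^sup>+\<omega>. g j \<omega> \<partial>M) + (\<Sum>k\<in>{1..N}. \<integral>\<^sup>+\<omega>. g k \<omega> \<partial>M) / of_nat N"
      by (rule nn_integral_add_mean[OF g j])
    finally show ?thesis by (simp add: g_def mult_ac)
  qed
  finally show ?thesis unfolding \<sigma>_def .
qed

lemma powr_norm_update_le:
  assumes L: "bounded_linear L" "onorm L \<le> a" and \<delta>: "\<delta> \<ge> 0" and p: "p \<ge> 1"
    and l: "l1 > 0" "l2 > 0" "l3 > 0" "l1 + l2 + l3 = 1"
  shows "norm (L x + \<delta> *\<^sub>R y) powr p
    \<le> l1 powr (1 - p) * a powr p * norm x powr p + l2 powr (1 - p) * \<delta> powr p * norm (y - y0) powr p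
      + l3 powr (1 - p) * \<delta> powr p * norm y0 powr p"
proof -
  have "a \<ge> 0" using onorm_pos_le[OF L(1)] L(2) by linarith
  have "norm (L x) \<le> a * norm x"
    using onorm[OF L(1), of x] L(2) by (meson mult_right_mono norm_ge_zero order_trans)
  moreover have "norm y \<le> norm (y - y0) + norm y0" by (metis norm_triangle_sub add.commute)
  then have "norm (\<delta> *\<^sub>R y) \<le> \<delta> * norm (y - y0) + \<delta> * norm y0"
    using \<delta> by (simp add: distrib_left[symmetric] mult_left_mono)
  ultimately have "norm (L x + \<delta> *\<^sub>R y) \<le> a * norm x + \<delta> * norm (y - y0) + \<delta> * norm y0"
    using norm_triangle_ineq[of "L x" "\<delta> *\<^sub>R y"] by linarith
  then have "norm (L x + \<delta> *\<^sub>R y) powr p \<le> (a * norm x + \<delta> * norm (y - y0) + \<delta> * norm y0) powr p"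
    using p by (intro powr_mono2) auto
  also have "\<dots> \<le> l1 powr (1 - p) * (a * norm x) powr p + l2 powr (1 - p) * (\<delta> * norm (y - y0)) powr p
      + l3 powr (1 - p) * (\<delta> * norm y0) powr p"
    using \<delta> \<open>a \<ge> 0\<close> by (intro powr_add3_le_weighted[OF p _ _ _ l]) auto
  finally show ?thesis using \<delta> \<open>a \<ge> 0\<close> by (simp add: powr_mult mult.assoc)
qed

lemma (in prob_space) moment_update_le:
  fixes A :: "real^'d::finite^'d" and X :: "nat \<Rightarrow> 'a \<Rightarrow> real^'d" and \<epsilon> :: "'a \<Rightarrow> 'b::topological_space"
    and f :: "real^'d \<Rightarrow> (real^'d) measure \<Rightarrow> 'b \<Rightarrow> real^'d"
  assumes N: "N \<ge> 1" and j: "j \<in> {1..N}" and p: "p \<ge> 1" and \<delta>: "\<delta> \<ge> 0"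
    and A: "onorm (\<lambda>x. A *v x) \<le> a"
    and l: "l1 > 0" "l2 > 0" "l3 > 0" "l1 + l2 + l3 = 1"
    and f_meas: "(\<lambda>(x, \<mu>, z). f x \<mu> z) \<in>
      borel_measurable (borel \<Otimes>\<^sub>M (restrict_space (subprob_algebra borel) P1 \<Otimes>\<^sub>M borel))"
    and X: "\<And>k. k \<in> {1..N} \<Longrightarrow> X k \<in> borel_measurable M"
    and eps: "random_variable borel \<epsilon>" and law: "distr M borel \<epsilon> = \<theta>"
    and indep: "distr M (PiM {1..N} (\<lambda>_. borel)) (\<lambda>\<omega>. \<lambda>k\<in>{1..N}. X k \<omega>) \<Otimes>\<^sub>M distr M borel \<epsilon>
      = distr M (PiM {1..N} (\<lambda>_. borel) \<Otimes>\<^sub>M borel) (\<lambda>\<omega>. (\<lambda>k\<in>{1..N}. X k \<omega>, \<epsilon> \<omega>))"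
  shows "(\<integral>\<^sup>+\<omega>. ennreal (norm (A *v X j \<omega> + \<delta> *\<^sub>R f (X j \<omega>) (emp N (\<lambda>k. X k \<omega>)) (\<epsilon> \<omega>)) powr p) \<partial>M)
    \<le> ennreal (l1 powr (1 - p) * a powr p) * (\<integral>\<^sup>+\<omega>. ennreal (norm (X j \<omega>) powr p) \<partial>M)
      + ennreal (l2 powr (1 - p) * \<delta> powr p * 2 powr (p - 1)) * (\<integral>\<^sup>+z. ennpow (Dlip f z) p \<partial>\<theta>)
        * ((\<integral>\<^sup>+\<omega>. ennreal (norm (X j \<omega>) powr p) \<partial>M)
           + (\<Sum>k\<in>{1..N}. \<integral>\<^sup>+\<omega>. ennreal (norm (X k \<omega>) powr p) \<partial>M) / of_nat N)
      + ennreal (l3 powr (1 - p) * \<delta> powr p) * (\<integral>\<^sup>+z. ennreal (D1 f z powr p) \<partial>\<theta>)"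
proof -
  define \<Delta> where "\<Delta> \<omega> = norm (f (X j \<omega>) (emp N (\<lambda>k. X k \<omega>)) (\<epsilon> \<omega>) - f 0 (return borel 0) (\<epsilon> \<omega>))" for \<omega>
  define d where "d \<omega> = D1 f (\<epsilon> \<omega>)" for \<omega>
  define c1 where "c1 = l1 powr (1 - p) * a powr p"
  define c2 where "c2 = l2 powr (1 - p) * \<delta> powr p"
  define c3 where "c3 = l3 powr (1 - p) * \<delta> powr p"
  have lin: "bounded_linear (\<lambda>x. A *v x)" by (rule matrix_vector_mul_bounded_linear)
  have f0: "(\<lambda>z. f 0 (return borel 0) z) \<in> borel_measurable borel"
    by (rule measurable_section[OF f_meas return_in_P1])
  have \<Delta>_meas: "\<Delta> \<in> borel_measurable M"
    unfolding \<Delta>_def using measurable_interaction_comp[OF N j f_meas X eps] measurable_comp[OF eps f0]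
    by (simp add: comp_def)
  have d_meas: "d \<in> borel_measurable M"
    unfolding d_def D1_def using measurable_comp[OF eps f0] by (simp add: comp_def)
  have pointwise: "ennreal (norm (A *v X j \<omega> + \<delta> *\<^sub>R f (X j \<omega>) (emp N (\<lambda>k. X k \<omega>)) (\<epsilon> \<omega>)) powr p)
      \<le> ennreal c1 * ennreal (norm (X j \<omega>) powr p) + ennreal c2 * ennreal (\<Delta> \<omega> powr p)
        + ennreal c3 * ennreal (d \<omega> powr p)" for \<omega>
    using powr_norm_update_le[OF lin A \<delta> p l, of "X j \<omega>" _ "f 0 (return borel 0) (\<epsilon> \<omega>)"]
    unfolding \<Delta>_def d_def D1_def c1_def c2_def c3_def
    by (simp add: ennreal_mult[symmetric] ennreal_plus[symmetric] del: ennreal_plus)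
  have "(\<integral>\<^sup>+\<omega>. ennreal (norm (A *v X j \<omega> + \<delta> *\<^sub>R f (X j \<omega>) (emp N (\<lambda>k. X k \<omega>)) (\<epsilon> \<omega>)) powr p) \<partial>M)
      \<le> ennreal c1 * (\<integral>\<^sup>+\<omega>. ennreal (norm (X j \<omega>) powr p) \<partial>M) + ennreal c2 * (\<integral>\<^sup>+\<omega>. ennreal (\<Delta> \<omega> powr p) \<partial>M)
        + ennreal c3 * (\<integral>\<^sup>+\<omega>. ennreal (d \<omega> powr p) \<partial>M)"
  proof -
    have "(\<lambda>\<omega>. ennreal (norm (X j \<omega>) powr p)) \<in> borel_measurable M"
      "(\<lambda>\<omega>. ennreal (\<Delta> \<omega> powr p)) \<in> borel_measurable M"
      "(\<lambda>\<omega>. ennreal (d \<omega> powr p)) \<in> borel_measurable M"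
      using X[OF j] \<Delta>_meas d_meas by measurable
    moreover have "(\<integral>\<^sup>+\<omega>. ennreal (norm (A *v X j \<omega> + \<delta> *\<^sub>R f (X j \<omega>) (emp N (\<lambda>k. X k \<omega>)) (\<epsilon> \<omega>)) powr p) \<partial>M)
      \<le> (\<integral>\<^sup>+\<omega>. ennreal c1 * ennreal (norm (X j \<omega>) powr p) + ennreal c2 * ennreal (\<Delta> \<omega> powr p)
        + ennreal c3 * ennreal (d \<omega> powr p) \<partial>M)"
      by (rule nn_integral_mono) (rule pointwise)
    ultimately show ?thesis by (simp add: nn_integral_add nn_integral_cmult)
  qed
  also have "(\<integral>\<^sup>+\<omega>. ennreal (\<Delta> \<omega> powr p) \<partial>M)
      \<le> ennreal (2 powr (p - 1)) * (\<integral>\<^sup>+z. ennpow (Dlip f z) p \<partial>\<theta>)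
        * ((\<integral>\<^sup>+\<omega>. ennreal (norm (X j \<omega>) powr p) \<partial>M)
           + (\<Sum>k\<in>{1..N}. \<integral>\<^sup>+\<omega>. ennreal (norm (X k \<omega>) powr p) \<partial>M) / of_nat N)"
    unfolding \<Delta>_def by (rule nn_integral_interaction_indep_le[OF N j p f_meas X eps law indep])
  also have "(\<integral>\<^sup>+\<omega>. ennreal (d \<omega> powr p) \<partial>M) = (\<integral>\<^sup>+z. ennreal (D1 f z powr p) \<partial>\<theta>)"
    unfolding d_def law[symmetric] using measurable_comp[OF f0 borel_measurable_norm] eps
    by (simp add: nn_integral_distr D1_def comp_def)
  finally show ?thesis
    by (simp add: c1_def c2_def c3_def ennreal_mult mult.assoc mult_left_mono add_mono)
qed

lemma measurable_particle:
  fixes A :: "real^'d::finite^'d"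
    and f :: "real^'d \<Rightarrow> (real^'d) measure \<Rightarrow> real^'m::finite \<Rightarrow> real^'d"
  assumes N: "N \<ge> 1"
    and f_meas: "(\<lambda>(x, \<mu>, z). f x \<mu> z) \<in>
      borel_measurable (borel \<Otimes>\<^sub>M (restrict_space (subprob_algebra borel) P1 \<Otimes>\<^sub>M borel))"
    and X0: "\<And>j. j \<in> {1..N} \<Longrightarrow> X0 N j \<in> borel_measurable M"
    and eps: "\<And>j k. j \<in> {1..N} \<Longrightarrow> k \<in> {1..n} \<Longrightarrow> eps j k \<in> borel_measurable M"
  shows "m \<le> n \<Longrightarrow> j \<in> {1..N} \<Longrightarrow> particle A \<delta> f X0 eps N m j \<in> borel_measurable M"
proof (induction m arbitrary: j)
  case 0
  then show ?case using X0 by simp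
next
  case (Suc m)
  let ?X = "\<lambda>j. particle A \<delta> f X0 eps N m j"
  have X: "?X j \<in> borel_measurable M" if "j \<in> {1..N}" for j
    using Suc that by simp
  have "(\<lambda>w. f (?X j w) (emp N (\<lambda>k. ?X k w)) (eps j (Suc m) w)) \<in> borel_measurable M"
    using Suc.prems by (intro measurable_interaction_comp[OF N _ f_meas X eps]) auto
  moreover have "(\<lambda>x. A *v x) \<in> borel_measurable borel"
    by (intro borel_measurable_continuous_onI linear_continuous_on matrix_vector_mul_bounded_linear)
  then have "(\<lambda>w. A *v ?X j w) \<in> borel_measurable M"
    using measurable_comp[OF X[OF Suc.prems(2)]] by (simp add: comp_def)
  ultimately show ?case by simp
qed

lemma preimage_in_vimage_algebra_PiM:
  fixes Y :: "'i \<Rightarrow> 'a \<Rightarrow> 'b::topological_space"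
  assumes "k \<in> I" "B \<in> sets borel"
  shows "Y k -` B \<inter> \<Omega> \<in> sets (vimage_algebra \<Omega> (\<lambda>w. \<lambda>i\<in>I. Y i w) (PiM I (\<lambda>_. borel)))"
proof -
  have "(\<lambda>h. h k) -` B \<inter> space (PiM I (\<lambda>_. borel :: 'b measure)) \<in> sets (PiM I (\<lambda>_. borel))"
    by (rule measurable_sets[OF measurable_component_singleton[OF assms(1)] assms(2)])
  from in_vimage_algebra[OF this, of "\<lambda>w. \<lambda>i\<in>I. Y i w" \<Omega>]
  show ?thesis
    using assms(1) by (simp add: space_PiM vimage_def Int_def)
qed

definition generated_events :: "'a set \<Rightarrow> ('i \<Rightarrow> 'a \<Rightarrow> 'b::topological_space) \<Rightarrow> 'i set \<Rightarrow> 'a set set" where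
  "generated_events \<Omega> Y S = sigma_sets \<Omega> (\<Union>k\<in>S. {Y k -` B \<inter> \<Omega> | B. B \<in> sets borel})"

lemma generated_events_subset_vimage_algebra:
  fixes Y :: "'i \<Rightarrow> 'a \<Rightarrow> 'b::topological_space"
  assumes "S \<subseteq> I"
  shows "generated_events \<Omega> Y S \<subseteq> sets (vimage_algebra \<Omega> (\<lambda>w. \<lambda>i\<in>I. Y i w) (PiM I (\<lambda>_. borel)))"
  unfolding generated_events_def
  using assms preimage_in_vimage_algebra_PiM[of _ I _ Y \<Omega>]
  by (intro sets.sigma_sets_subset') (auto simp: sets.sets_into_space sets_vimage_algebra_space)

lemma (in prob_space) indep_set_generated_events:
  fixes Y :: "'i \<Rightarrow> 'a \<Rightarrow> 'b::topological_space"
  assumes indep: "indep_vars (\<lambda>_. borel) Y I" and "S \<subseteq> I" "T \<subseteq> I" "S \<inter> T = {}"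
  shows "indep_set (generated_events (space M) Y S) (generated_events (space M) Y T)"
proof -
  define E where "E k = {Y k -` B \<inter> space M | B. B \<in> sets (borel :: 'b measure)}" for k
  have "indep_sets (\<lambda>b. sigma_sets (space M) (\<Union>k\<in>case_bool S T b. E k)) UNIV"
  proof (rule indep_sets_collect_sigma)
    show "indep_sets E (\<Union>b\<in>UNIV. case_bool S T b)"
    proof (rule indep_sets_mono_index)
      show "indep_sets E I" using indep unfolding indep_vars_def2 E_def by simp
      show "(\<Union>b\<in>UNIV. case_bool S T b) \<subseteq> I"
        using assms(2,3) by (auto split: bool.split_asm)
    qed
    show "Int_stable (E k)" for k
    proof (rule Int_stableI)
      fix a b assume "a \<in> E k" "b \<in> E k"
      then obtain B B' where "B \<in> sets borel" "B' \<in> sets borel"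
        and "a = Y k -` B \<inter> space M" "b = Y k -` B' \<inter> space M"
        by (auto simp: E_def)
      then show "a \<inter> b \<in> E k" unfolding E_def by (intro CollectI exI[of _ "B \<inter> B'"]) auto
    qed
    show "disjoint_family_on (case_bool S T) UNIV"
      using assms(4) by (auto simp: disjoint_family_on_def split: bool.split)
  qed
  moreover have "(\<lambda>b. sigma_sets (space M) (\<Union>k\<in>case_bool S T b. E k))
      = case_bool (generated_events (space M) Y S) (generated_events (space M) Y T)"
    by (auto simp: E_def generated_events_def fun_eq_iff split: bool.split)
  ultimately show ?thesis unfolding indep_set_def by simp
qed

lemma Int_stable_sigma_sets:
  assumes "G \<subseteq> Pow \<Omega>"
  shows "Int_stable (sigma_sets \<Omega> G)"
proof -
  interpret sigma_algebra \<Omega> "sigma_sets \<Omega> G" by (rule sigma_algebra_sigma_sets[OF assms])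
  show ?thesis by (rule Int_stable)
qed

lemma (in prob_space) indep_set_sigma_Int:
  assumes AE: "indep_set A E" and BC: "indep_set B C"
    and BE: "B \<subseteq> E" and BC_E: "\<And>b c. b \<in> B \<Longrightarrow> c \<in> C \<Longrightarrow> b \<inter> c \<in> E"
    and stable: "Int_stable A" "Int_stable B" "Int_stable C"
  shows "indep_set (sigma_sets (space M) {a \<inter> b | a b. a \<in> A \<and> b \<in> B}) C"
proof -
  let ?P = "{a \<inter> b | a b. a \<in> A \<and> b \<in> B}"
  have "indep_set ?P C"
    unfolding indep_sets2_eq
  proof (intro conjI ballI)
    show "?P \<subseteq> events" using indep_setD_ev1[OF AE] indep_setD_ev1[OF BC] by auto
    show "C \<subseteq> events" by (rule indep_setD_ev2[OF BC])
    fix ab c assume "ab \<in> ?P" and c: "c \<in> C"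
    then obtain a b where ab: "ab = a \<inter> b" "a \<in> A" "b \<in> B" by auto
    have "prob (ab \<inter> c) = prob (a \<inter> (b \<inter> c))" by (simp add: ab Int_assoc)
    also have "\<dots> = prob a * prob (b \<inter> c)" using indep_setD[OF AE ab(2) BC_E[OF ab(3) c]] .
    also have "\<dots> = prob a * (prob b * prob c)" using indep_setD[OF BC ab(3) c] by simp
    also have "\<dots> = prob ab * prob c" using indep_setD[OF AE ab(2) subsetD[OF BE ab(3)]] ab by simp
    finally show "prob (ab \<inter> c) = prob ab * prob c" .
  qed
  moreover have "Int_stable ?P"
  proof (unfold Int_stable_def, safe)
    fix a1 b1 a2 b2 assume "a1 \<in> A" "b1 \<in> B" "a2 \<in> A" "b2 \<in> B"
    then show "\<exists>a b. a1 \<inter> b1 \<inter> (a2 \<inter> b2) = a \<inter> b \<and> a \<in> A \<and> b \<in> B"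
      using stable(1,2) unfolding Int_stable_def
      by (intro exI[of _ "a1 \<inter> a2"] exI[of _ "b1 \<inter> b2"]) blast
  qed
  ultimately have "indep_set (sigma_sets (space M) ?P) (sigma_sets (space M) C)"
    using stable(3) by (rule indep_set_sigma_sets)
  then show ?thesis
    unfolding indep_sets2_eq by (auto intro: sigma_sets.Basic)
qed

lemma (in prob_space) indep_set_init_past_future:
  fixes Y :: "'i \<Rightarrow> 'a \<Rightarrow> 'b::topological_space"
  assumes Y: "indep_vars (\<lambda>_. borel) Y I"
    and init: "indep_set G (sets (vimage_algebra (space M) (\<lambda>w. \<lambda>k\<in>I. Y k w) (PiM I (\<lambda>_. borel))))"
    and G: "Int_stable G" and ST: "S \<subseteq> I" "T \<subseteq> I" "S \<inter> T = {}"
  shows "indep_set (sigma_sets (space M) {a \<inter> b | a b. a \<in> G \<and> b \<in> generated_events (space M) Y S})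
    (generated_events (space M) Y T)"
proof (rule indep_set_sigma_Int[OF init indep_set_generated_events[OF Y ST]])
  show "generated_events (space M) Y S
      \<subseteq> sets (vimage_algebra (space M) (\<lambda>w. \<lambda>k\<in>I. Y k w) (PiM I (\<lambda>_. borel)))"
    by (rule generated_events_subset_vimage_algebra[OF ST(1)])
  show "b \<inter> c \<in> sets (vimage_algebra (space M) (\<lambda>w. \<lambda>k\<in>I. Y k w) (PiM I (\<lambda>_. borel)))"
    if "b \<in> generated_events (space M) Y S" "c \<in> generated_events (space M) Y T" for b c
    using that generated_events_subset_vimage_algebra[OF ST(1), of "space M" Y]
      generated_events_subset_vimage_algebra[OF ST(2), of "space M" Y]
    by (intro sets.Int) auto
  have "Int_stable (generated_events (space M) Y U)" for U
    unfolding generated_events_def by (rule Int_stable_sigma_sets) auto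
  then show "Int_stable (generated_events (space M) Y S)" "Int_stable (generated_events (space M) Y T)"
    by auto
qed (rule G)

lemma (in prob_space) distr_pair_eq_if_indep_set:
  assumes X: "random_variable S X" and Y: "random_variable T Y" and FG: "indep_set F G"
    and XF: "\<And>A. A \<in> sets S \<Longrightarrow> X -` A \<inter> space M \<in> F"
    and YG: "\<And>B. B \<in> sets T \<Longrightarrow> Y -` B \<inter> space M \<in> G"
  shows "distr M S X \<Otimes>\<^sub>M distr M T Y = distr M (S \<Otimes>\<^sub>M T) (\<lambda>\<omega>. (X \<omega>, Y \<omega>))"
proof -
  interpret SX: prob_space "distr M S X" by (rule prob_space_distr[OF X])
  interpret TY: prob_space "distr M T Y" by (rule prob_space_distr[OF Y])
  interpret ST: pair_prob_space "distr M S X" "distr M T Y" ..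
  show ?thesis
  proof (rule pair_measure_eqI)
    fix A B assume "A \<in> sets (distr M S X)" "B \<in> sets (distr M T Y)"
    then have A: "A \<in> sets S" and B: "B \<in> sets T" by auto
    have "(\<lambda>\<omega>. (X \<omega>, Y \<omega>)) -` (A \<times> B) \<inter> space M = (X -` A \<inter> space M) \<inter> (Y -` B \<inter> space M)"
      by auto
    then have "emeasure (distr M (S \<Otimes>\<^sub>M T) (\<lambda>\<omega>. (X \<omega>, Y \<omega>))) (A \<times> B)
        = emeasure M (X -` A \<inter> space M) * emeasure M (Y -` B \<inter> space M)"
      using A B indep_setD[OF FG XF[OF A] YG[OF B]] measurable_Pair[OF X Y]
      by (simp add: emeasure_distr emeasure_eq_measure measure_nonneg ennreal_mult)
    then show "emeasure (distr M S X) A * emeasure (distr M T Y) B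
        = emeasure (distr M (S \<Otimes>\<^sub>M T) (\<lambda>\<omega>. (X \<omega>, Y \<omega>))) (A \<times> B)"
      using A B X Y by (simp add: emeasure_distr)
  qed (simp_all add: SX.sigma_finite_measure_axioms TY.sigma_finite_measure_axioms)
qed

lemma measurable_particle_past:
  fixes A :: "real^'d::finite^'d"
    and f :: "real^'d \<Rightarrow> (real^'d) measure \<Rightarrow> real^'m::finite \<Rightarrow> real^'d"
    and X0 :: "nat \<Rightarrow> nat \<Rightarrow> 'a \<Rightarrow> real^'d"
    and eps :: "nat \<Rightarrow> nat \<Rightarrow> 'a \<Rightarrow> real^'m"
    and \<Omega> :: "'a set" and n :: nat
  assumes N: "N \<ge> 1"
    and f_meas: "(\<lambda>(x, \<mu>, z). f x \<mu> z) \<in>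
      borel_measurable (borel \<Otimes>\<^sub>M (restrict_space (subprob_algebra borel) P1 \<Otimes>\<^sub>M borel))"
    and C: "C \<in> sets (PiM {1..N} (\<lambda>_. borel))"
  defines "P \<equiv> {a \<inter> b | a b.
    a \<in> sets (vimage_algebra \<Omega> (\<lambda>w. \<lambda>j\<in>{1..N}. X0 N j w) (PiM {1..N} (\<lambda>_. borel)))
    \<and> b \<in> generated_events \<Omega> (\<lambda>(i, n). eps i n) ({1..} \<times> {1..n})}"
  shows "(\<lambda>w. \<lambda>j\<in>{1..N}. particle A \<delta> f X0 eps N n j w) -` C \<inter> \<Omega> \<in> sigma_sets \<Omega> P"
proof -
  let ?GX = "sets (vimage_algebra \<Omega> (\<lambda>w. \<lambda>j\<in>{1..N}. X0 N j w) (PiM {1..N} (\<lambda>_. borel)))"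
  let ?past = "generated_events \<Omega> (\<lambda>(i, n). eps i n) ({1..} \<times> {1..n})"
  define MF where "MF = sigma \<Omega> P"
  have "\<Omega> \<in> ?GX" by (rule sets_vimage_algebra_space)
  have "\<Omega> \<in> ?past" unfolding generated_events_def by (rule sigma_sets_top)
  have "P \<subseteq> Pow \<Omega>"
    using sets.sets_into_space[of _ "vimage_algebra \<Omega> (\<lambda>w. \<lambda>j\<in>{1..N}. X0 N j w) (PiM {1..N} (\<lambda>_. borel))"]
    unfolding P_def by fastforce
  then have space_MF: "space MF = \<Omega>" and sets_MF: "sets MF = sigma_sets \<Omega> P"
    unfolding MF_def by (simp_all add: space_measure_of_conv sets_measure_of)
  have measurable_MF: "Z \<in> borel_measurable MF"
    if "\<And>B. B \<in> sets borel \<Longrightarrow> Z -` B \<inter> \<Omega> \<in> P" for Z :: "'a \<Rightarrow> 'e::topological_space"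
    by (rule measurableI) (auto simp: space_MF sets_MF intro: sigma_sets.Basic that)
  have X0_MF: "X0 N j \<in> borel_measurable MF" if "j \<in> {1..N}" for j
  proof (rule measurable_MF)
    fix B :: "(real^'d) set" assume "B \<in> sets borel"
    then have "X0 N j -` B \<inter> \<Omega> \<in> ?GX" by (rule preimage_in_vimage_algebra_PiM[OF that])
    then show "X0 N j -` B \<inter> \<Omega> \<in> P" unfolding P_def using \<open>\<Omega> \<in> ?past\<close> by blast
  qed
  have eps_MF: "eps j k \<in> borel_measurable MF" if "j \<in> {1..N}" "k \<in> {1..n}" for j k
  proof (rule measurable_MF)
    fix B :: "(real^'m) set" assume "B \<in> sets borel"
    then have "eps j k -` B \<inter> \<Omega> \<in> ?past"
      unfolding generated_events_def using that by (intro sigma_sets.Basic UN_I[of "(j, k)"]) auto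
    then show "eps j k -` B \<inter> \<Omega> \<in> P" unfolding P_def using \<open>\<Omega> \<in> ?GX\<close> by blast
  qed
  have "particle A \<delta> f X0 eps N n j \<in> borel_measurable MF" if "j \<in> {1..N}" for j
    by (rule measurable_particle[where n = n and N = N and ?X0.0 = X0 and eps = eps, OF N f_meas X0_MF eps_MF])
      (use that in auto)
  then have "(\<lambda>w. \<lambda>j\<in>{1..N}. particle A \<delta> f X0 eps N n j w) \<in> measurable MF (PiM {1..N} (\<lambda>_. borel))"
    by (intro measurable_restrict) auto
  from measurable_sets[OF this C] show ?thesis by (simp add: space_MF sets_MF)
qed

lemma (in prob_space) particle_noise_indep:
  fixes A :: "real^'d::finite^'d"
    and f :: "real^'d \<Rightarrow> (real^'d) measure \<Rightarrow> real^'m::finite \<Rightarrow> real^'d"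
    and X0 :: "nat \<Rightarrow> nat \<Rightarrow> 'a \<Rightarrow> real^'d"
    and eps :: "nat \<Rightarrow> nat \<Rightarrow> 'a \<Rightarrow> real^'m"
  assumes N: "N \<ge> 1"
    and f_meas: "(\<lambda>(x, \<mu>, z). f x \<mu> z) \<in>
      borel_measurable (borel \<Otimes>\<^sub>M (restrict_space (subprob_algebra borel) P1 \<Otimes>\<^sub>M borel))"
    and X0_meas: "\<And>j. j \<in> {1..N} \<Longrightarrow> X0 N j \<in> borel_measurable M"
    and eps_meas: "\<And>i n. i \<ge> 1 \<Longrightarrow> n \<ge> 1 \<Longrightarrow> eps i n \<in> borel_measurable M"
    and eps_indep: "indep_vars (\<lambda>_. borel) (\<lambda>(i, n). eps i n) ({1..} \<times> {1..})"
    and indep_init: "indep_set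
      (sets (vimage_algebra (space M) (\<lambda>w. \<lambda>i\<in>{1..N}. X0 N i w) (PiM {1..N} (\<lambda>_. borel))))
      (sets (vimage_algebra (space M) (\<lambda>w. \<lambda>(i, n)\<in>{1..} \<times> {1..}. eps i n w)
        (PiM ({1..} \<times> {1..}) (\<lambda>_. borel))))"
    and i: "i \<ge> 1"
  shows "distr M (PiM {1..N} (\<lambda>_. borel)) (\<lambda>w. \<lambda>j\<in>{1..N}. particle A \<delta> f X0 eps N n j w)
      \<Otimes>\<^sub>M distr M borel (eps i (Suc n))
    = distr M (PiM {1..N} (\<lambda>_. borel) \<Otimes>\<^sub>M borel)
        (\<lambda>w. (\<lambda>j\<in>{1..N}. particle A \<delta> f X0 eps N n j w, eps i (Suc n) w))"
proof (rule distr_pair_eq_if_indep_set)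
  define I :: "(nat \<times> nat) set" where "I = {1..} \<times> {1..}"
  define Y where "Y = (\<lambda>(i, n). eps i n)"
  have "(\<lambda>w. \<lambda>k\<in>I. Y k w) = (\<lambda>w. \<lambda>(i, n)\<in>I. eps i n w)"
    by (auto simp: Y_def fun_eq_iff split: prod.split)
  then show "indep_set (sigma_sets (space M) {a \<inter> b | a b.
      a \<in> sets (vimage_algebra (space M) (\<lambda>w. \<lambda>j\<in>{1..N}. X0 N j w) (PiM {1..N} (\<lambda>_. borel)))
      \<and> b \<in> generated_events (space M) (\<lambda>(i, n). eps i n) ({1..} \<times> {1..n})})
    (generated_events (space M) (\<lambda>(i, n). eps i n) {(i, Suc n)})"
    using eps_indep indep_init i unfolding Y_def[symmetric]
    by (intro indep_set_init_past_future[where I = I]) (auto simp: I_def sets.Int_stable)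
  show "eps i (Suc n) -` B \<inter> space M \<in> generated_events (space M) (\<lambda>(i, n). eps i n) {(i, Suc n)}"
    if "B \<in> sets borel" for B
    unfolding generated_events_def using that by (intro sigma_sets.Basic) auto
  have "particle A \<delta> f X0 eps N n j \<in> borel_measurable M" if "j \<in> {1..N}" for j
    by (rule measurable_particle[where n = n and N = N and ?X0.0 = X0 and eps = eps, OF N f_meas X0_meas])
      (use that eps_meas in auto)
  then show "random_variable (PiM {1..N} (\<lambda>_. borel)) (\<lambda>w. \<lambda>j\<in>{1..N}. particle A \<delta> f X0 eps N n j w)"
    by (intro measurable_restrict) auto
  show "random_variable borel (eps i (Suc n))" using eps_meas i by simp
qed (rule measurable_particle_past[OF N f_meas])

lemma (in prob_space) particle_moment_step:
  fixes A :: "real^'d::finite^'d"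
    and f :: "real^'d \<Rightarrow> (real^'d) measure \<Rightarrow> real^'m::finite \<Rightarrow> real^'d"
    and X0 :: "nat \<Rightarrow> nat \<Rightarrow> 'a \<Rightarrow> real^'d"
    and eps :: "nat \<Rightarrow> nat \<Rightarrow> 'a \<Rightarrow> real^'m"
  assumes N: "N \<ge> 1" and j: "j \<in> {1..N}" and p: "p \<ge> 1" and \<delta>: "\<delta> \<ge> 0"
    and A: "onorm (\<lambda>x. A *v x) \<le> a"
    and l: "l1 > 0" "l2 > 0" "l3 > 0" "l1 + l2 + l3 = 1"
    and f_meas: "(\<lambda>(x, \<mu>, z). f x \<mu> z) \<in>
      borel_measurable (borel \<Otimes>\<^sub>M (restrict_space (subprob_algebra borel) P1 \<Otimes>\<^sub>M borel))"
    and X0_meas: "\<And>j. j \<in> {1..N} \<Longrightarrow> X0 N j \<in> borel_measurable M"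
    and eps_meas: "\<And>i n. i \<ge> 1 \<Longrightarrow> n \<ge> 1 \<Longrightarrow> eps i n \<in> borel_measurable M"
    and eps_law: "\<And>i n. i \<ge> 1 \<Longrightarrow> n \<ge> 1 \<Longrightarrow> distr M borel (eps i n) = \<theta>"
    and eps_indep: "indep_vars (\<lambda>_. borel) (\<lambda>(i, n). eps i n) ({1..} \<times> {1..})"
    and indep_init: "indep_set
      (sets (vimage_algebra (space M) (\<lambda>w. \<lambda>i\<in>{1..N}. X0 N i w) (PiM {1..N} (\<lambda>_. borel))))
      (sets (vimage_algebra (space M) (\<lambda>w. \<lambda>(i, n)\<in>{1..} \<times> {1..}. eps i n w)
        (PiM ({1..} \<times> {1..}) (\<lambda>_. borel))))"
  defines "m n k \<equiv> \<integral>\<^sup>+w. ennreal (norm (particle A \<delta> f X0 eps N n k w) powr p) \<partial>M"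
  shows "m (Suc n) j
    \<le> ennreal (l1 powr (1 - p) * a powr p) * m n j
      + ennreal (l2 powr (1 - p) * \<delta> powr p * 2 powr (p - 1)) * (\<integral>\<^sup>+z. ennpow (Dlip f z) p \<partial>\<theta>)
        * (m n j + (\<Sum>k\<in>{1..N}. m n k) / of_nat N)
      + ennreal (l3 powr (1 - p) * \<delta> powr p) * (\<integral>\<^sup>+z. ennreal (D1 f z powr p) \<partial>\<theta>)"
  unfolding m_def particle.simps
proof (rule moment_update_le[OF N j p \<delta> A l f_meas])
  show "particle A \<delta> f X0 eps N n k \<in> borel_measurable M" if "k \<in> {1..N}" for k
    by (rule measurable_particle[where n = n and N = N and ?X0.0 = X0 and eps = eps, OF N f_meas X0_meas])
      (use that eps_meas in auto)
  show "random_variable borel (eps j (Suc n))" "distr M borel (eps j (Suc n)) = \<theta>"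
    using j eps_meas eps_law by auto
  show "distr M (PiM {1..N} (\<lambda>_. borel)) (\<lambda>w. \<lambda>k\<in>{1..N}. particle A \<delta> f X0 eps N n k w)
      \<Otimes>\<^sub>M distr M borel (eps j (Suc n))
    = distr M (PiM {1..N} (\<lambda>_. borel) \<Otimes>\<^sub>M borel)
        (\<lambda>w. (\<lambda>k\<in>{1..N}. particle A \<delta> f X0 eps N n k w, eps j (Suc n) w))"
    using j by (intro particle_noise_indep[where N = N and ?X0.0 = X0 and eps = eps,
        OF N f_meas X0_meas eps_meas eps_indep indep_init]) auto
qed

text \<open>The mean over the particles obeys the same bound as each
  particle, so a uniform bound propagates as soon as \<open>a + 2 b < 1\<close>.\<close>
lemma ennreal_mean_field_recursion_bounded:
  fixes u :: "nat \<Rightarrow> nat \<Rightarrow> ennreal"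
  assumes J: "finite J" "J \<noteq> {}" and abc: "a \<ge> 0" "b \<ge> 0" "c \<ge> 0" and rho: "a + 2 * b < 1"
    and init: "\<And>j. j \<in> J \<Longrightarrow> u 0 j \<le> ennreal K0"
    and step: "\<And>n j. j \<in> J \<Longrightarrow>
      u (Suc n) j \<le> ennreal a * u n j + ennreal b * (u n j + (\<Sum>k\<in>J. u n k) / of_nat (card J)) + ennreal c"
  shows "j \<in> J \<Longrightarrow> u n j \<le> ennreal (max K0 (c / (1 - (a + 2 * b))))"
proof (induction n arbitrary: j)
  case 0
  then show ?case using init[OF 0] by (simp add: order_trans[OF _ ennreal_leI])
next
  case (Suc n)
  define K where "K = max K0 (c / (1 - (a + 2 * b)))"
  have "0 \<le> c / (1 - (a + 2 * b))" "c / (1 - (a + 2 * b)) \<le> K"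
    using abc rho by (simp_all add: K_def)
  then have "K \<ge> 0" "c \<le> (1 - (a + 2 * b)) * K"
    using rho by (linarith, simp add: pos_divide_le_eq mult.commute)
  have IH: "u n k \<le> ennreal K" if "k \<in> J" for k using Suc.IH that by (simp add: K_def)
  have "(\<Sum>k\<in>J. u n k) / of_nat (card J) \<le> (\<Sum>k\<in>J. ennreal K) / of_nat (card J)"
    by (intro divide_right_mono_ennreal sum_mono IH)
  also have "\<dots> = ennreal K"
  proof -
    have "real (card J) > 0" using J by (simp add: card_gt_0_iff)
    then show ?thesis using \<open>K \<ge> 0\<close>
      by (simp add: ennreal_of_nat_eq_real_of_nat ennreal_mult[symmetric] divide_ennreal)
  qed
  finally have mean: "(\<Sum>k\<in>J. u n k) / of_nat (card J) \<le> ennreal K" .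
  have "u (Suc n) j \<le> ennreal a * ennreal K + ennreal b * (ennreal K + ennreal K) + ennreal c"
    using step[OF Suc.prems] IH[OF Suc.prems] mean
    by (meson add_mono mult_left_mono order_refl order_trans zero_le)
  also have "\<dots> = ennreal (a * K + b * (K + K) + c)"
    using abc \<open>K \<ge> 0\<close>
    by (simp add: ennreal_plus[symmetric] ennreal_mult[symmetric] del: ennreal_plus)
  also have "\<dots> \<le> ennreal K"
    using \<open>c \<le> (1 - (a + 2 * b)) * K\<close> by (intro ennreal_leI) (simp add: algebra_simps)
  finally show ?case by (simp add: K_def)
qed

lemma contraction_weights:
  fixes \<alpha> \<omega> \<delta> \<sigma> :: real
  assumes "\<alpha> > 0" "\<omega> > 0" "\<sigma> \<ge> 0"
    and small: "\<sigma> = 0 \<or> \<delta> powr (1 + \<alpha>) < (4 powr (- \<alpha>) - exp (- (1 + \<alpha>) * \<omega>)) / (2 * \<sigma>)"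
  obtains l1 l2 l3 where "l1 > 0" "l2 > 0" "l3 > 0" "l1 + l2 + l3 = 1"
    "l1 powr (- \<alpha>) * exp (- \<omega>) powr (1 + \<alpha>) + 2 * (l2 powr (- \<alpha>) * \<delta> powr (1 + \<alpha>) * 2 powr \<alpha> * \<sigma>) < 1"
proof (cases "\<sigma> = 0")
  case True
  have "exp (- \<omega>) < 1" using \<open>\<omega> > 0\<close> by simp
  moreover have "exp (- \<omega>) powr (- \<alpha>) * exp (- \<omega>) powr (1 + \<alpha>) = exp (- \<omega>)"
    by (simp add: powr_add[symmetric])
  ultimately show ?thesis
    using True that[of "exp (- \<omega>)" "(1 - exp (- \<omega>)) / 2" "(1 - exp (- \<omega>)) / 2"] by simp
next
  case False
  then have "2 * \<sigma> * \<delta> powr (1 + \<alpha>) < 4 powr (- \<alpha>) - exp (- (1 + \<alpha>) * \<omega>)"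
    using small \<open>\<sigma> \<ge> 0\<close> by (simp add: pos_less_divide_eq mult.commute)
  then have "4 powr \<alpha> * (exp (- (1 + \<alpha>) * \<omega>) + 2 * \<sigma> * \<delta> powr (1 + \<alpha>)) < 4 powr \<alpha> * 4 powr (- \<alpha>)"
    by (intro mult_strict_left_mono) auto
  moreover have "(1 / 4) powr (- \<alpha>) * exp (- \<omega>) powr (1 + \<alpha>) + 2 * ((1 / 2) powr (- \<alpha>) * \<delta> powr (1 + \<alpha>) * 2 powr \<alpha> * \<sigma>)
      = 4 powr \<alpha> * (exp (- (1 + \<alpha>) * \<omega>) + 2 * \<sigma> * \<delta> powr (1 + \<alpha>))"
  proof -
    have "(1 / 4 :: real) powr (- \<alpha>) = 4 powr \<alpha>" "(1 / 2 :: real) powr (- \<alpha>) = 2 powr \<alpha>"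
      by (simp_all add: powr_minus powr_divide)
    moreover have "(2 :: real) powr \<alpha> * 2 powr \<alpha> = 4 powr \<alpha>"
      by (simp add: powr_mult[symmetric])
    moreover have "exp (- \<omega>) powr (1 + \<alpha>) = exp (- (1 + \<alpha>) * \<omega>)"
      by (simp add: powr_def algebra_simps)
    ultimately show ?thesis by (simp add: algebra_simps)
  qed
  text \<open>These are the weights behind the constant \<open>a(\<alpha>)\<close> of the smallness condition.\<close>
  ultimately show ?thesis
    using that[of "1 / 4" "1 / 2" "1 / 4"] by (simp add: powr_add[symmetric])
qed

theorem lemma4p4:
  fixes M :: "'w measure"
    and A :: "real^'d::finite^'d"
    and \<omega> \<alpha> \<delta> :: real
    and \<theta> :: "(real^'m::finite) measure"
    and \<mu>0 :: "(real^'d) measure"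
    and f :: "real^'d \<Rightarrow> (real^'d) measure \<Rightarrow> real^'m \<Rightarrow> real^'d"
    and X0 :: "nat \<Rightarrow> nat \<Rightarrow> 'w \<Rightarrow> real^'d"
    and eps :: "nat \<Rightarrow> nat \<Rightarrow> 'w \<Rightarrow> real^'m"
  assumes M: "prob_space M"
    and theta: "prob_space \<theta>" "sets \<theta> = sets borel"
    and mu0: "\<mu>0 \<in> P1"
    and f_meas: "(\<lambda>(x, \<mu>, z). f x \<mu> z) \<in>
        borel_measurable (borel \<Otimes>\<^sub>M (restrict_space (subprob_algebra borel) P1 \<Otimes>\<^sub>M borel))"
    and X0_meas: "\<And>N i. N \<ge> 1 \<Longrightarrow> i \<in> {1..N} \<Longrightarrow> X0 N i \<in> borel_measurable M"
    and X0_law: "\<And>N i. N \<ge> 1 \<Longrightarrow> i \<in> {1..N} \<Longrightarrow> distr M borel (X0 N i) = \<mu>0"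
    and X0_exch: "\<And>N p. N \<ge> 1 \<Longrightarrow> p permutes {1..N} \<Longrightarrow>
        distr M (PiM {1..N} (\<lambda>_. borel)) (\<lambda>w. \<lambda>i\<in>{1..N}. X0 N (p i) w)
      = distr M (PiM {1..N} (\<lambda>_. borel)) (\<lambda>w. \<lambda>i\<in>{1..N}. X0 N i w)"
    and eps_meas: "\<And>i n. i \<ge> 1 \<Longrightarrow> n \<ge> 1 \<Longrightarrow> eps i n \<in> borel_measurable M"
    and eps_law: "\<And>i n. i \<ge> 1 \<Longrightarrow> n \<ge> 1 \<Longrightarrow> distr M borel (eps i n) = \<theta>"
    and eps_indep: "prob_space.indep_vars M (\<lambda>_. borel) (\<lambda>(i, n). eps i n) ({1..} \<times> {1..})"
    and indep_init: "\<And>N. N \<ge> 1 \<Longrightarrow> prob_space.indep_set M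
        (sets (vimage_algebra (space M) (\<lambda>w. \<lambda>i\<in>{1..N}. X0 N i w) (PiM {1..N} (\<lambda>_. borel))))
        (sets (vimage_algebra (space M) (\<lambda>w. \<lambda>(i, n)\<in>{1..} \<times> {1..}. eps i n w)
                 (PiM ({1..} \<times> {1..}) (\<lambda>_. borel))))"
    and A3: "\<omega> > 0" "onorm (\<lambda>x. A *v x) \<le> exp (- \<omega>)"
    and alpha: "\<alpha> > 0"
    and A4_mu0: "(\<integral>\<^sup>+x. ennreal (norm x powr (1 + \<alpha>)) \<partial>\<mu>0) < \<infinity>"
    and A4_D: "(\<integral>\<^sup>+z. ennpow (Dlip f z) (1 + \<alpha>) \<partial>\<theta>) < \<infinity>"
    and A4_D1: "(\<integral>\<^sup>+z. ennreal (D1 f z powr (1 + \<alpha>)) \<partial>\<theta>) < \<infinity>"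
    and delta: "\<delta> > 0"
    and delta_small: "let \<sigma>1 = enn2real (\<integral>\<^sup>+z. ennpow (Dlip f z) (1 + \<alpha>) \<partial>\<theta>) in
        \<sigma>1 = 0 \<or> \<delta> powr (1 + \<alpha>) < (4 powr (- \<alpha>) - exp (- (1 + \<alpha>) * \<omega>)) / (2 * \<sigma>1)"
  shows "(SUP N\<in>{1..}. SUP n\<in>{1..}.
           \<integral>\<^sup>+w. ennreal (norm (particle A \<delta> f X0 eps N n 1 w) powr (1 + \<alpha>)) \<partial>M) < \<infinity>"
proof -
  interpret prob_space M by (rule M)
  obtain \<sigma> where \<sigma>: "(\<integral>\<^sup>+z. ennpow (Dlip f z) (1 + \<alpha>) \<partial>\<theta>) = ennreal \<sigma>" "\<sigma> \<ge> 0"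
    using A4_D by (auto simp: less_top_ennreal)
  obtain \<kappa> where \<kappa>: "(\<integral>\<^sup>+z. ennreal (D1 f z powr (1 + \<alpha>)) \<partial>\<theta>) = ennreal \<kappa>" "\<kappa> \<ge> 0"
    using A4_D1 by (auto simp: less_top_ennreal)
  obtain m0 where m0: "(\<integral>\<^sup>+x. ennreal (norm x powr (1 + \<alpha>)) \<partial>\<mu>0) = ennreal m0"
    using A4_mu0 by (auto simp: less_top_ennreal)
  have "\<sigma> = 0 \<or> \<delta> powr (1 + \<alpha>) < (4 powr (- \<alpha>) - exp (- (1 + \<alpha>) * \<omega>)) / (2 * \<sigma>)"
    using delta_small unfolding Let_def \<sigma>(1) enn2real_ennreal[OF \<sigma>(2)] .
  then obtain l1 l2 l3 where l: "l1 > 0" "l2 > 0" "l3 > 0" "l1 + l2 + l3 = 1"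
    and contraction: "l1 powr (- \<alpha>) * exp (- \<omega>) powr (1 + \<alpha>)
      + 2 * (l2 powr (- \<alpha>) * \<delta> powr (1 + \<alpha>) * 2 powr \<alpha> * \<sigma>) < 1"
    by (rule contraction_weights[OF alpha A3(1) \<sigma>(2)])
  define K where "K = max m0 (l3 powr (- \<alpha>) * \<delta> powr (1 + \<alpha>) * \<kappa>
    / (1 - (l1 powr (- \<alpha>) * exp (- \<omega>) powr (1 + \<alpha>)
      + 2 * (l2 powr (- \<alpha>) * \<delta> powr (1 + \<alpha>) * 2 powr \<alpha> * \<sigma>))))"
  have "(\<integral>\<^sup>+w. ennreal (norm (particle A \<delta> f X0 eps N n j w) powr (1 + \<alpha>)) \<partial>M) \<le> ennreal K"
    if N: "N \<ge> 1" and j: "j \<in> {1..N}" for N n j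
    unfolding K_def
  proof (rule ennreal_mean_field_recursion_bounded[OF _ _ _ _ _ contraction _ _ j], goal_cases)
    case (6 k)
    have "(\<integral>\<^sup>+w. ennreal (norm (X0 N k w) powr (1 + \<alpha>)) \<partial>M)
        = (\<integral>\<^sup>+x. ennreal (norm x powr (1 + \<alpha>)) \<partial>distr M borel (X0 N k))"
      using X0_meas[OF N 6] by (simp add: nn_integral_distr)
    then show ?case using X0_law[OF N 6] m0 by simp
  next
    case (7 n k)
    have "1 \<le> 1 + \<alpha>" "0 \<le> \<delta>" using alpha delta by auto
    from particle_moment_step[where ?X0.0 = X0 and eps = eps and N = N and n = n,
        OF N 7 this A3(2) l f_meas X0_meas[OF N] eps_meas eps_law eps_indep indep_init[OF N]]
    show ?case using \<sigma> \<kappa> by (simp add: ennreal_mult mult.assoc)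
  qed (use N l \<sigma>(2) \<kappa>(2) in auto)
  then have "(SUP N\<in>{1..}. SUP n\<in>{1..}.
      \<integral>\<^sup>+w. ennreal (norm (particle A \<delta> f X0 eps N n 1 w) powr (1 + \<alpha>)) \<partial>M) \<le> ennreal K"
    by (intro SUP_least) auto
  then show ?thesis by (rule le_less_trans) simp
qed

end
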